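(* Let $G=(K\cup I,E)$ be a split graph and $(V,\mathcal{F})$ the split graph vertex shelling antimatroid defined on $G$. Then the family $\mathcal{F}_*$ of $*$-feasible sets equals the family of filters of the poset $(K\cup I,\prec)$.
   Context: A split graph $G=(K\cup I,E)$ is a finite simple graph whose vertex set $V=K\cup I$ comes with a fixed partition into a clique $K$ and an independent set $I$. We write $u\sim v$ for adjacency; for $F\subseteq V$, $N(F)$ is the set of vertices of $V\setminus F$ adjacent to some vertex of $F$. A vertex is simplicial if its neighbours induce a clique. The split graph vertex shelling antimatroid of $G$ is $(V,\mathcal{F})$ where $F\subseteq V$ is feasible iff there is an ordering $f_1,\dots,f_{|F|}$ of $F$ such that each $f_j$ is simplicial in $G$ minus $\{f_1,\dots,f_{j-1}\}$ (the empty set is feasible). A feasible set $F$ is $*$-feasible if $N(F)\subseteq K$; $\mathcal{F}_*$ is the family of $*$-feasible sets. The strict order $\prec$ on $K\cup I$ is defined by $u\prec v$ iff $u\in K$, $v\in I$ and $u\sim v$ (its reflexive closure is a partial order of height at most two). A filter of a poset is a subset $F$ such that $a\in F$ and $a\preceq b$ imply $b\in F$. *)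

theory Defs
  imports Main
begin

definition split_graph :: "'a set \<Rightarrow> 'a set \<Rightarrow> ('a \<Rightarrow> 'a \<Rightarrow> bool) \<Rightarrow> bool" where
  "split_graph K I E \<longleftrightarrow> finite K \<and> finite I \<and> K \<inter> I = {}
     \<and> (\<forall>u v. E u v \<longrightarrow> E v u) \<and> (\<forall>u. \<not> E u u)
     \<and> (\<forall>u v. E u v \<longrightarrow> u \<in> K \<union> I \<and> v \<in> K \<union> I)
     \<and> (\<forall>u\<in>K. \<forall>v\<in>K. u \<noteq> v \<longrightarrow> E u v)
     \<and> (\<forall>u\<in>I. \<forall>v\<in>I. \<not> E u v)"

definition simplicial_in :: "'a set \<Rightarrow> ('a \<Rightarrow> 'a \<Rightarrow> bool) \<Rightarrow> 'a \<Rightarrow> bool" where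
  "simplicial_in W E v \<longleftrightarrow> v \<in> W \<and>
     (\<forall>x\<in>W. \<forall>y\<in>W. E v x \<and> E v y \<and> x \<noteq> y \<longrightarrow> E x y)"

definition shelling_feasible :: "'a set \<Rightarrow> ('a \<Rightarrow> 'a \<Rightarrow> bool) \<Rightarrow> 'a set \<Rightarrow> bool" where
  "shelling_feasible V E F \<longleftrightarrow>
     (\<exists>fs. distinct fs \<and> set fs = F \<and>
        (\<forall>j < length fs. simplicial_in (V - set (take j fs)) E (fs ! j)))"

definition nbhd :: "'a set \<Rightarrow> ('a \<Rightarrow> 'a \<Rightarrow> bool) \<Rightarrow> 'a set \<Rightarrow> 'a set" where
  "nbhd V E F = {v \<in> V - F. \<exists>u\<in>F. E u v}"

definition star_feasible :: "'a set \<Rightarrow> 'a set \<Rightarrow> ('a \<Rightarrow> 'a \<Rightarrow> bool) \<Rightarrow> 'a set \<Rightarrow> bool" where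
  "star_feasible K I E F \<longleftrightarrow> shelling_feasible (K \<union> I) E F \<and> nbhd (K \<union> I) E F \<subseteq> K"

definition split_prec :: "'a set \<Rightarrow> 'a set \<Rightarrow> ('a \<Rightarrow> 'a \<Rightarrow> bool) \<Rightarrow> 'a \<Rightarrow> 'a \<Rightarrow> bool" where
  "split_prec K I E u v \<longleftrightarrow> u \<in> K \<and> v \<in> I \<and> E u v"

definition is_filter :: "'a set \<Rightarrow> ('a \<Rightarrow> 'a \<Rightarrow> bool) \<Rightarrow> 'a set \<Rightarrow> bool" where
  "is_filter V le F \<longleftrightarrow> F \<subseteq> V \<and> (\<forall>a\<in>F. \<forall>b\<in>V. le a b \<longrightarrow> b \<in> F)"

end

theory Submission
  imports Defs
begin

text \<open>A vertex of I is simplicial in every induced subgraph containing it, since all its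
  neighbours lie in the clique K. A vertex u \<in> K of a filter F has all its I-neighbours
  in F, so once the vertices of F \<inter> I are removed, u is simplicial as well. Hence the
  filters are shelled by removing F \<inter> I first and F \<inter> K afterwards, and their neighbourhoods
  avoid I. Conversely, a vertex of I outside a feasible F adjacent to F lies in the
  neighbourhood of F, so N(F) \<subseteq> K forces the filter property.\<close>

lemma simplicial_in_subset:
  assumes "simplicial_in W E v" "v \<in> W'" "W' \<subseteq> W"
  shows "simplicial_in W' E v"
  using assms unfolding simplicial_in_def by blast

lemma nth_notin_set_take:
  assumes "distinct xs" "j < length xs"
  shows "xs ! j \<notin> set (take j xs)"
proof -
  have "xs ! j \<in> set (drop j xs)"
    using assms(2) by (metis Cons_nth_drop_Suc list.set_intros(1))
  thus ?thesis
    using set_take_disj_set_drop_if_distinct[OF assms(1) order_refl] by blast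
qed

lemma shelling_feasible_subset:
  assumes "shelling_feasible V E F"
  shows "F \<subseteq> V"
proof
  fix x assume "x \<in> F"
  obtain fs where fs: "set fs = F" "\<forall>j < length fs. simplicial_in (V - set (take j fs)) E (fs ! j)"
    using assms unfolding shelling_feasible_def by blast
  obtain j where "j < length fs" "fs ! j = x"
    using \<open>x \<in> F\<close> fs(1) by (metis in_set_conv_nth)
  thus "x \<in> V" using fs(2) unfolding simplicial_in_def by blast
qed

lemma shelling_feasible_two_stages:
  assumes "finite A" "finite B" "A \<inter> B = {}"
    and A_simp: "\<And>a. a \<in> A \<Longrightarrow> simplicial_in V E a"
    and B_simp: "\<And>b. b \<in> B \<Longrightarrow> simplicial_in (V - A) E b"
  shows "shelling_feasible V E (A \<union> B)"
proof -
  obtain xs where xs: "distinct xs" "set xs = A"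
    using finite_distinct_list[OF assms(1)] by blast
  obtain ys where ys: "distinct ys" "set ys = B"
    using finite_distinct_list[OF assms(2)] by blast
  define fs where "fs = xs @ ys"
  have dist: "distinct fs" using xs ys assms(3) by (simp add: fs_def)
  have "simplicial_in (V - set (take j fs)) E (fs ! j)" if j: "j < length fs" for j
  proof -
    have fresh: "fs ! j \<notin> set (take j fs)" using nth_notin_set_take[OF dist j] .
    show ?thesis
    proof (cases "j < length xs")
      case True
      hence "fs ! j \<in> A" using xs nth_mem by (fastforce simp: fs_def nth_append)
      with A_simp have "simplicial_in V E (fs ! j)" by blast
      moreover from this have "fs ! j \<in> V" unfolding simplicial_in_def by blast
      ultimately show ?thesis using fresh by (blast intro: simplicial_in_subset)
    next
      case False
      hence "fs ! j \<in> B" using j ys nth_mem by (fastforce simp: fs_def nth_append)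
      with B_simp have "simplicial_in (V - A) E (fs ! j)" by blast
      moreover from this have "fs ! j \<in> V" unfolding simplicial_in_def by blast
      moreover have "A \<subseteq> set (take j fs)"
        using False xs by (simp add: fs_def)
      ultimately show ?thesis using fresh by (blast intro: simplicial_in_subset)
    qed
  qed
  moreover have "set fs = A \<union> B" using xs ys by (simp add: fs_def)
  ultimately show ?thesis unfolding shelling_feasible_def using dist by blast
qed

lemma split_graph_neighbour_of_indep:
  assumes "split_graph K I E" "v \<in> I" "E v x"
  shows "x \<in> K"
  using assms unfolding split_graph_def by blast

lemma split_graph_simplicial_indep:
  assumes "split_graph K I E" "v \<in> I"
  shows "simplicial_in (K \<union> I) E v"
  using assms split_graph_neighbour_of_indep[OF assms]
  unfolding simplicial_in_def split_graph_def by blast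

lemma split_graph_filter_simplicial_clique:
  assumes sg: "split_graph K I E"
    and fil: "is_filter (K \<union> I) (\<lambda>a b. a = b \<or> split_prec K I E a b) F"
    and u: "u \<in> F \<inter> K"
  shows "simplicial_in (K \<union> I - F \<inter> I) E u"
proof -
  have "x \<in> K" if "x \<in> K \<union> I - F \<inter> I" "E u x" for x
    using fil u that unfolding is_filter_def split_prec_def by blast
  moreover have "u \<notin> I" using sg u unfolding split_graph_def by blast
  ultimately show ?thesis
    using sg u unfolding simplicial_in_def split_graph_def by blast
qed

lemma split_graph_filter_shelling_feasible:
  assumes sg: "split_graph K I E"
    and fil: "is_filter (K \<union> I) (\<lambda>a b. a = b \<or> split_prec K I E a b) F"
  shows "shelling_feasible (K \<union> I) E F"
proof -
  have "F = F \<inter> I \<union> F \<inter> K" using fil unfolding is_filter_def by blast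
  moreover have "shelling_feasible (K \<union> I) E (F \<inter> I \<union> F \<inter> K)"
  proof (rule shelling_feasible_two_stages)
    show "finite (F \<inter> I)" "finite (F \<inter> K)" "F \<inter> I \<inter> (F \<inter> K) = {}"
      using sg unfolding split_graph_def by auto
  qed (use split_graph_simplicial_indep[OF sg]
         split_graph_filter_simplicial_clique[OF sg fil] in auto)
  ultimately show ?thesis by simp
qed

lemma split_graph_filter_nbhd_subset:
  assumes sg: "split_graph K I E"
    and fil: "is_filter (K \<union> I) (\<lambda>a b. a = b \<or> split_prec K I E a b) F"
  shows "nbhd (K \<union> I) E F \<subseteq> K"
proof
  fix v assume "v \<in> nbhd (K \<union> I) E F"
  then obtain u where v: "v \<in> K \<union> I" "v \<notin> F" and u: "u \<in> F" "E u v"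
    unfolding nbhd_def by blast
  show "v \<in> K"
  proof (rule ccontr)
    assume "v \<notin> K"
    with v have "v \<in> I" by blast
    moreover from this have "u \<in> K"
      using sg u(2) split_graph_neighbour_of_indep[OF sg] unfolding split_graph_def by blast
    ultimately have "v \<in> F"
      using fil u v unfolding is_filter_def split_prec_def by blast
    with v show False by blast
  qed
qed

lemma split_graph_star_feasible_filter:
  assumes sg: "split_graph K I E" and sf: "star_feasible K I E F"
  shows "is_filter (K \<union> I) (\<lambda>a b. a = b \<or> split_prec K I E a b) F"
proof -
  have FV: "F \<subseteq> K \<union> I"
    using sf shelling_feasible_subset unfolding star_feasible_def by blast
  have "b \<in> F" if "a \<in> F" "b \<in> I" "E a b" for a b
  proof (rule ccontr)
    assume "b \<notin> F"
    with that have "b \<in> nbhd (K \<union> I) E F" unfolding nbhd_def by blast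
    hence "b \<in> K" using sf unfolding star_feasible_def by blast
    with \<open>b \<in> I\<close> sg show False unfolding split_graph_def by blast
  qed
  with FV show ?thesis unfolding is_filter_def split_prec_def by blast
qed

theorem mainTheorem8:
  fixes K I :: "'a set" and E :: "'a \<Rightarrow> 'a \<Rightarrow> bool"
  assumes "split_graph K I E"
  shows "{F. star_feasible K I E F} =
         {F. is_filter (K \<union> I) (\<lambda>a b. a = b \<or> split_prec K I E a b) F}"
  using split_graph_star_feasible_filter[OF assms]
    split_graph_filter_shelling_feasible[OF assms] split_graph_filter_nbhd_subset[OF assms]
  unfolding star_feasible_def by blast

end
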